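(* Let $S_{\mathrm{test}}\subseteq\{\pm1\}^n\times\{\pm1\}$ be a finite labeled test set, $d\ge0$, $s\ge1$, $\varepsilon_a>0$, and $\mathcal{H}$ a mapping from restrictions of depth $\le d$ to hypotheses. If there is some list $P$ of $s$ pairwise disjoint restrictions, each of depth $\le d$, for which $\mathrm{error}(P\circ\mathcal{H},S_{\mathrm{test}})\le\varepsilon$, then $\mathrm{FindSubcubeList}(S_{\mathrm{test}},\mathcal{H},\varepsilon_a,s)$ outputs a (not necessarily disjoint) list $L$ of restrictions satisfying \[ \mathrm{error}(L\circ\mathcal{H},S_{\mathrm{test}})\le O\left(\varepsilon\log(1/\varepsilon_a)+\varepsilon_a\right). \]
   Context: A restriction is $\rho\in\{\pm1,\star\}^n$; $x\in\rho$ means $x_i=\rho_i$ or $\rho_i=\star$ for all $i$; depth of $\rho$ = number of non-$\star$ coordinates; two restrictions are disjoint if no $x$ is consistent with both. For a labeled set $S$, $S_\rho=\{(x,y)\in S:x\in\rho\}$ and $\mathrm{error}(h,S)$ is the fraction of $(x,y)\in S$ with $h(x)\neq y$, where an output $\bot$ always counts as an error. For an ordered list $L$ of restrictions, the subcube list hypothesis $L\circ\mathcal{H}$ outputs $\mathcal{H}(\rho)(x)$ for the first $\rho\in L$ with $x\in\rho$, and $\bot$ if no such $\rho$ exists. Procedure $\mathrm{FindSubcubeList}(S_{\mathrm{test}},\mathcal{H},\varepsilon_a,s)$: set $S_{\mathrm{rem}}\leftarrow S_{\mathrm{test}}$, $L\leftarrow$ empty list; while $|S_{\mathrm{rem}}|/|S_{\mathrm{test}}|>\varepsilon_a$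 and at most $\lceil 2s\ln(1/\varepsilon_a)\rceil$ iterations have run: among all restrictions $\rho$ of depth $\le d$ with $|(S_{\mathrm{rem}})_\rho|/|S_{\mathrm{rem}}|\ge\frac{1}{2s}$, choose $\rho^\star$ minimizing $\mathrm{error}(\mathcal{H}(\rho),(S_{\mathrm{rem}})_\rho)$; append $\rho^\star$ to $L$ and set $S_{\mathrm{rem}}\leftarrow S_{\mathrm{rem}}\setminus(S_{\mathrm{rem}})_{\rho^\star}$; finally return $L$. *)

theory Defs
  imports Complex_Main
begin

text \<open>Points of the cube: bool lists (True = +1, False = -1); labels are bools.
  Restrictions: lists of bool option (None = star, Some b = fixed coordinate).\<close>

type_synonym point = "bool list"
type_synonym restriction = "bool option list"
type_synonym hyp = "point \<Rightarrow> bool"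

definition consistent :: "point \<Rightarrow> restriction \<Rightarrow> bool" where
  "consistent x \<rho> \<longleftrightarrow> list_all2 (\<lambda>xi ri. ri = None \<or> ri = Some xi) x \<rho>"

definition depth :: "restriction \<Rightarrow> nat" where
  "depth \<rho> = length (filter (\<lambda>r. r \<noteq> None) \<rho>)"

definition restr_disjoint :: "restriction \<Rightarrow> restriction \<Rightarrow> bool" where
  "restr_disjoint \<rho>1 \<rho>2 \<longleftrightarrow> \<not> (\<exists>x. consistent x \<rho>1 \<and> consistent x \<rho>2)"

definition restrict_set :: "(point \<times> bool) set \<Rightarrow> restriction \<Rightarrow> (point \<times> bool) set" where
  "restrict_set S \<rho> = {(x, y) \<in> S. consistent x \<rho>}"

text \<open>Error of a possibly-abstaining hypothesis (None = bottom, always an error).\<close>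
definition error :: "(point \<Rightarrow> bool option) \<Rightarrow> (point \<times> bool) set \<Rightarrow> real" where
  "error h S = real (card {(x, y) \<in> S. h x \<noteq> Some y}) / real (card S)"

fun subcube_list_hyp :: "restriction list \<Rightarrow> (restriction \<Rightarrow> hyp) \<Rightarrow> point \<Rightarrow> bool option" where
  "subcube_list_hyp [] H x = None"
| "subcube_list_hyp (\<rho> # L) H x =
     (if consistent x \<rho> then Some (H \<rho> x) else subcube_list_hyp L H x)"

definition candidates :: "nat \<Rightarrow> nat \<Rightarrow> nat \<Rightarrow> (point \<times> bool) set \<Rightarrow> restriction set" where
  "candidates n d s R = {\<rho>. length \<rho> = n \<and> depth \<rho> \<le> d \<and>
      real (card (restrict_set R \<rho>)) / real (card R) \<ge> 1 / (2 * real s)}"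

definition iter_bound :: "nat \<Rightarrow> real \<Rightarrow> nat" where
  "iter_bound s ea = nat \<lceil>2 * real s * ln (1 / ea)\<rceil>"

definition loop_cond :: "(point \<times> bool) set \<Rightarrow> real \<Rightarrow> nat \<Rightarrow> (point \<times> bool) set \<Rightarrow> nat \<Rightarrow> bool" where
  "loop_cond S ea s R k \<longleftrightarrow>
     real (card R) / real (card S) > ea \<and> k < iter_bound s ea"

text \<open>Reachable states (S_rem, L, number of iterations) of FindSubcubeList(S, H, ea, s)
  with depth parameter d on n-dimensional points; ties in the argmin are resolved
  arbitrarily (all choices are allowed).\<close>
inductive fsl_reach :: "nat \<Rightarrow> nat \<Rightarrow> (point \<times> bool) set \<Rightarrow> (restriction \<Rightarrow> hyp) \<Rightarrow> real \<Rightarrow> nat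
    \<Rightarrow> (point \<times> bool) set \<Rightarrow> restriction list \<Rightarrow> nat \<Rightarrow> bool"
  for n d S H ea s where
  init: "fsl_reach n d S H ea s S [] 0"
| step: "fsl_reach n d S H ea s R L k \<Longrightarrow> loop_cond S ea s R k \<Longrightarrow>
     \<rho> \<in> candidates n d s R \<Longrightarrow>
     (\<forall>\<rho>' \<in> candidates n d s R.
        error (\<lambda>x. Some (H \<rho> x)) (restrict_set R \<rho>) \<le> error (\<lambda>x. Some (H \<rho>' x)) (restrict_set R \<rho>')) \<Longrightarrow>
     fsl_reach n d S H ea s (R - restrict_set R \<rho>) (L @ [\<rho>]) (Suc k)"

definition find_subcube_list ::
  "nat \<Rightarrow> nat \<Rightarrow> (point \<times> bool) set \<Rightarrow> (restriction \<Rightarrow> hyp) \<Rightarrow> real \<Rightarrow> nat \<Rightarrow> restriction list \<Rightarrow> bool" where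
  "find_subcube_list n d S H ea s L \<longleftrightarrow>
     (\<exists>R k. fsl_reach n d S H ea s R L k \<and> \<not> loop_cond S ea s R k)"

end

theory Submission
  imports Defs
begin

(* Let E = eps |S| bound the mistakes of P. While the set R of uncovered examples has at
  least 4E elements, the pieces of P too light to be candidates (each below a 1/(2s) fraction)
  hold at most half of R, and on the remaining examples, including those P leaves uncovered,
  P errs at most E times. Averaging yields a candidate piece, hence also the greedy choice,
  with error at most 4E/|R|. Shrinking R from r to r - m examples thus costs at most
  4E m/r <= 4E (ln r - ln (r - m)) mistakes, which telescopes to 4E ln (|S|/t) for
  t = max 4E (ea |S|); below t each example costs at most one. Every step removes a 1/(2s)
  fraction of R, so after 2s ln (1/ea) steps at most ea |S| <= t examples stay uncovered,
  and they count as mistakes too. *)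

definition mistakes :: "(point \<Rightarrow> bool option) \<Rightarrow> (point \<times> bool) set \<Rightarrow> (point \<times> bool) set" where
  "mistakes h S = {(x, y) \<in> S. h x \<noteq> Some y}"

definition uncovered :: "restriction list \<Rightarrow> (point \<times> bool) set \<Rightarrow> (point \<times> bool) set" where
  "uncovered L S = {(x, y) \<in> S. \<forall>\<rho> \<in> set L. \<not> consistent x \<rho>}"

definition restrs_disjoint :: "restriction list \<Rightarrow> bool" where
  "restrs_disjoint P \<longleftrightarrow>
     (\<forall>i < length P. \<forall>j < length P. i \<noteq> j \<longrightarrow> restr_disjoint (P ! i) (P ! j))"

lemma error_eq_card_mistakes: "error h S = card (mistakes h S) / card S"
  by (simp add: error_def mistakes_def)

lemma error_nonneg: "0 \<le> error h S"
  by (simp add: error_def)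

lemma error_le_1:
  assumes "finite S"
  shows "error h S \<le> 1"
proof -
  have "card (mistakes h S) \<le> card S"
    using assms by (intro card_mono) (auto simp: mistakes_def)
  then show ?thesis
    by (cases "card S = 0") (simp_all add: error_eq_card_mistakes divide_le_eq_1)
qed

lemma mistakes_Un: "mistakes h (A \<union> B) = mistakes h A \<union> mistakes h B"
  by (auto simp: mistakes_def)

lemma mistakes_cong: "(\<And>x y. (x, y) \<in> A \<Longrightarrow> h x = g x) \<Longrightarrow> mistakes h A = mistakes g A"
  by (auto simp: mistakes_def)

lemma mistakes_mono: "A \<subseteq> B \<Longrightarrow> mistakes h A \<subseteq> mistakes h B"
  by (auto simp: mistakes_def)

lemma mistakes_subset: "mistakes h A \<subseteq> A"
  by (auto simp: mistakes_def)

lemma restrict_set_subset: "restrict_set S \<rho> \<subseteq> S"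
  by (auto simp: restrict_set_def)

lemma uncovered_subset: "uncovered L S \<subseteq> S"
  by (auto simp: uncovered_def)

lemma uncovered_Nil: "uncovered [] S = S"
  by (auto simp: uncovered_def)

lemma uncovered_snoc: "uncovered (L @ [\<rho>]) S = uncovered L S - restrict_set (uncovered L S) \<rho>"
  by (auto simp: uncovered_def restrict_set_def)

lemma subcube_list_hyp_eq_None_iff:
  "subcube_list_hyp L H x = None \<longleftrightarrow> (\<forall>\<rho> \<in> set L. \<not> consistent x \<rho>)"
  by (induction L) auto

lemma subcube_list_hyp_append:
  "subcube_list_hyp (L @ M) H x =
     (if \<exists>\<rho> \<in> set L. consistent x \<rho> then subcube_list_hyp L H x else subcube_list_hyp M H x)"
  by (induction L) auto

lemma subcube_list_hyp_nth:
  assumes "restrs_disjoint P" "i < length P" "consistent x (P ! i)"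
  shows "subcube_list_hyp P H x = Some (H (P ! i) x)"
  using assms
proof (induction P arbitrary: i)
  case (Cons \<rho> P)
  show ?case
  proof (cases i)
    case 0
    with Cons.prems show ?thesis by simp
  next
    case (Suc j)
    have "restr_disjoint ((\<rho> # P) ! 0) ((\<rho> # P) ! i)"
      using Cons.prems \<open>i = Suc j\<close> unfolding restrs_disjoint_def by blast
    then have "\<not> consistent x \<rho>"
      using Cons.prems by (auto simp: restr_disjoint_def)
    moreover have "restrs_disjoint P"
      using Cons.prems(1) unfolding restrs_disjoint_def by fastforce
    ultimately show ?thesis
      using Cons Suc by simp
  qed
qed simp

lemma uncovered_subset_mistakes: "uncovered L S \<subseteq> mistakes (subcube_list_hyp L H) S"
proof
  fix z assume "z \<in> uncovered L S"
  then obtain x y where "z = (x, y)" "z \<in> S" "subcube_list_hyp L H x = None"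
    unfolding uncovered_def subcube_list_hyp_eq_None_iff by blast
  then show "z \<in> mistakes (subcube_list_hyp L H) S"
    by (simp add: mistakes_def)
qed

lemma mistakes_subcube_list_hyp_disjoint:
  assumes "restrs_disjoint P"
  shows "mistakes (subcube_list_hyp P H) R = uncovered P R \<union>
    (\<Union>i<length P. mistakes (\<lambda>x. Some (H (P ! i) x)) (restrict_set R (P ! i)))"
    (is "_ = _ \<union> (\<Union>i<_. ?M i)")
proof (intro equalityI subsetI)
  have piece: "subcube_list_hyp P H x = Some (H (P ! i) x)"
    if "i < length P" "(x, y) \<in> restrict_set R (P ! i)" for i x y
    using subcube_list_hyp_nth[OF assms] that by (simp add: restrict_set_def)
  {
    fix z assume z: "z \<in> mistakes (subcube_list_hyp P H) R"
    obtain x y where xy: "z = (x, y)" by fastforce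
    show "z \<in> uncovered P R \<union> (\<Union>i<length P. ?M i)"
    proof (cases "\<exists>i < length P. consistent x (P ! i)")
      case True
      then obtain i where "i < length P" "consistent x (P ! i)" by blast
      with z xy piece[of i x y] show ?thesis
        by (auto simp: mistakes_def restrict_set_def)
    next
      case False
      then have "\<forall>\<rho> \<in> set P. \<not> consistent x \<rho>"
        by (auto simp: in_set_conv_nth)
      with z xy show ?thesis
        by (simp add: uncovered_def mistakes_def)
    qed
  next
    fix z assume "z \<in> uncovered P R \<union> (\<Union>i<length P. ?M i)"
    then consider "z \<in> uncovered P R" | i where "i < length P" "z \<in> ?M i"
      by blast
    then show "z \<in> mistakes (subcube_list_hyp P H) R"
    proof cases
      case 1
      then show ?thesis using uncovered_subset_mistakes by blast
    next
      case 2
      then show ?thesis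
        using piece[of i] by (auto simp: mistakes_def restrict_set_def)
    qed
  }
qed

lemma card_mistakes_subcube_list_hyp_disjoint:
  assumes "restrs_disjoint P" "finite R"
  shows "card (mistakes (subcube_list_hyp P H) R) = card (uncovered P R) +
    (\<Sum>i<length P. card (mistakes (\<lambda>x. Some (H (P ! i) x)) (restrict_set R (P ! i))))"
proof -
  define M where "M i = mistakes (\<lambda>x. Some (H (P ! i) x)) (restrict_set R (P ! i))" for i
  have disjoint: "M i \<inter> M j = {}" if "i < length P" "j < length P" "i \<noteq> j" for i j
    using assms(1) that unfolding restrs_disjoint_def restr_disjoint_def
    by (auto simp: M_def mistakes_def restrict_set_def)
  have finite: "finite (M i)" for i
    unfolding M_def using assms(2) mistakes_subset restrict_set_subset by (metis finite_subset)
  have "card (uncovered P R \<union> (\<Union>i<length P. M i)) = card (uncovered P R) + card (\<Union>i<length P. M i)"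
    using finite_subset[OF uncovered_subset assms(2)] finite
    by (intro card_Un_disjoint) (auto simp: M_def mistakes_def restrict_set_def uncovered_def)
  also have "card (\<Union>i<length P. M i) = (\<Sum>i<length P. card (M i))"
    using disjoint finite by (intro card_UN_disjoint) auto
  finally show ?thesis
    using mistakes_subcube_list_hyp_disjoint[OF assms(1)] by (simp add: M_def)
qed

lemma card_le_card_uncovered_add_sum:
  "card R \<le> card (uncovered P R) + (\<Sum>i<length P. card (restrict_set R (P ! i)))"
proof -
  have "R = uncovered P R \<union> (\<Union>i<length P. restrict_set R (P ! i))"
    by (auto simp: uncovered_def restrict_set_def in_set_conv_nth)
  then have "card R \<le> card (uncovered P R) + card (\<Union>i<length P. restrict_set R (P ! i))"
    by (metis card_Un_le)
  also have "card (\<Union>i<length P. restrict_set R (P ! i)) \<le> (\<Sum>i<length P. card (restrict_set R (P ! i)))"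
    by (rule card_UN_le) simp
  finally show ?thesis
    by simp
qed

lemma sum_le_sum_imp_ex_le:
  fixes a c :: "'i \<Rightarrow> real"
  assumes "finite B" "B \<noteq> {}" "(\<Sum>i\<in>B. a i) \<le> (\<Sum>i\<in>B. c i)"
  shows "\<exists>i \<in> B. a i \<le> c i"
proof (rule ccontr)
  assume "\<not> ?thesis"
  then have "(\<Sum>i\<in>B. c i) < (\<Sum>i\<in>B. a i)"
    using assms(1,2) by (intro sum_strict_mono) auto
  with assms(3) show False by simp
qed

lemma sum_light_le_half:
  fixes c :: "nat \<Rightarrow> real"
  assumes "0 < r"
  shows "(\<Sum>i | i < s \<and> c i / r < 1 / (2 * real s). c i) \<le> r / 2"
proof -
  let ?light = "{i. i < s \<and> c i / r < 1 / (2 * real s)}"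
  have "c i \<le> r / (2 * real s)" if "i \<in> ?light" for i
    using that assms by (simp add: pos_divide_less_eq)
  then have "(\<Sum>i \<in> ?light. c i) \<le> real (card ?light) * (r / (2 * real s))"
    by (rule sum_bounded_above)
  also have "\<dots> \<le> real s * (r / (2 * real s))"
    using assms card_mono[of "{..<s}" ?light] by (intro mult_right_mono) auto
  also have "\<dots> \<le> r / 2"
    using assms by (cases "s = 0") auto
  finally show ?thesis .
qed

(* r: number of examples, u: those left uncovered by P, c i and m i: size of the i-th piece
  of P and number of mistakes of its hypothesis there. *)
lemma ex_heavy_piece_le:
  fixes c m :: "nat \<Rightarrow> real"
  assumes "0 < r" "0 \<le> u" "4 * E \<le> r" "\<And>i. 0 \<le> m i"
    and mistakes: "u + (\<Sum>i<s. m i) \<le> E" and cover: "r \<le> u + (\<Sum>i<s. c i)"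
  shows "\<exists>i < s. 1 / (2 * real s) \<le> c i / r \<and> m i \<le> 4 * E / r * c i"
proof -
  define heavy where "heavy = {i. i < s \<and> 1 / (2 * real s) \<le> c i / r}"
  have heavy_sub: "heavy \<subseteq> {..<s}"
    by (auto simp: heavy_def)
  have "{..<s} - heavy = {i. i < s \<and> c i / r < 1 / (2 * real s)}"
    by (auto simp: heavy_def)
  then have "(\<Sum>i \<in> {..<s} - heavy. c i) \<le> r / 2"
    using sum_light_le_half[OF assms(1)] by simp
  then have sum_c: "r / 2 - u \<le> (\<Sum>i\<in>heavy. c i)"
    using cover sum.subset_diff[OF heavy_sub, of c] by simp
  have sum_m: "(\<Sum>i\<in>heavy. m i) \<le> E - u"
    using mistakes sum_mono2[OF _ heavy_sub, of m] assms(4) by simp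
  have "u \<le> E" "0 \<le> E"
    using mistakes sum_nonneg[of "{..<s}" m] assms(2,4) by auto
  have "heavy \<noteq> {}"
  proof
    assume "heavy = {}"
    with sum_c \<open>u \<le> E\<close> assms(1,3) show False
      by simp
  qed
  have "4 * E / r * u \<le> u"
    using assms(1-3) \<open>0 \<le> E\<close> by (intro mult_left_le_one_le) auto
  then have "E - u \<le> 2 * E - 4 * E / r * u"
    using \<open>0 \<le> E\<close> by linarith
  also have "\<dots> = 4 * E / r * (r / 2 - u)"
    using assms(1) by (simp add: field_simps)
  also have "\<dots> \<le> 4 * E / r * (\<Sum>i\<in>heavy. c i)"
    using sum_c \<open>0 \<le> E\<close> assms(1) by (intro mult_left_mono) auto
  finally have "(\<Sum>i\<in>heavy. m i) \<le> (\<Sum>i\<in>heavy. 4 * E / r * c i)"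
    using sum_m by (simp add: sum_distrib_left)
  then show ?thesis
    using sum_le_sum_imp_ex_le[OF finite_subset[OF heavy_sub] \<open>heavy \<noteq> {}\<close>]
    by (auto simp: heavy_def)
qed

lemma greedy_choice_mistakes_le:
  fixes E :: real
  assumes "finite R" "R \<noteq> {}"
    and P: "\<forall>\<rho> \<in> set P. length \<rho> = n \<and> depth \<rho> \<le> d" and disj: "restrs_disjoint P"
    and mistakes_P: "card (mistakes (subcube_list_hyp P H) R) \<le> E" and "4 * E \<le> card R"
    and argmin: "\<forall>\<rho>' \<in> candidates n d (length P) R.
      error (\<lambda>x. Some (H \<rho> x)) (restrict_set R \<rho>) \<le> error (\<lambda>x. Some (H \<rho>' x)) (restrict_set R \<rho>')"
  shows "card (mistakes (\<lambda>x. Some (H \<rho> x)) (restrict_set R \<rho>))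
    \<le> 4 * E * card (restrict_set R \<rho>) / card R"
proof -
  define r where "r = real (card R)"
  define c where "c i = real (card (restrict_set R (P ! i)))" for i
  define m where "m i = real (card (mistakes (\<lambda>x. Some (H (P ! i) x)) (restrict_set R (P ! i))))" for i
  have r_pos: "0 < r"
    using assms(1,2) by (simp add: r_def card_gt_0_iff)
  have mistakes_sum: "real (card (uncovered P R)) + (\<Sum>i<length P. m i) \<le> E"
    using mistakes_P card_mistakes_subcube_list_hyp_disjoint[OF disj assms(1), of H] by (simp add: m_def)
  have cover: "r \<le> real (card (uncovered P R)) + (\<Sum>i<length P. c i)"
    using card_le_card_uncovered_add_sum[of R P] unfolding r_def c_def of_nat_sum[symmetric]
    by linarith
  have "4 * E \<le> r" "\<And>i. 0 \<le> m i"
    using \<open>4 * E \<le> card R\<close> by (simp_all add: r_def m_def)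
  then obtain i where i: "i < length P" "1 / (2 * real (length P)) \<le> c i / r" "m i \<le> 4 * E / r * c i"
    using ex_heavy_piece_le[OF r_pos of_nat_0_le_iff _ _ mistakes_sum cover] by blast
  have "P ! i \<in> candidates n d (length P) R"
    using i P by (auto simp: candidates_def c_def r_def)
  have "0 < 1 / (2 * real (length P))"
    using i(1) by auto
  with i(2) have "0 < c i / r"
    by linarith
  with i(3) r_pos have "m i / c i \<le> 4 * E / r"
    by (simp add: zero_less_divide_iff pos_divide_le_eq)
  then have "error (\<lambda>x. Some (H \<rho> x)) (restrict_set R \<rho>) \<le> 4 * E / r"
    using argmin \<open>P ! i \<in> _\<close> by (fastforce simp: error_eq_card_mistakes m_def c_def)
  moreover have "0 \<le> E"
    using mistakes_P by (meson of_nat_0_le_iff order_trans)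
  moreover have "card (mistakes (\<lambda>x. Some (H \<rho> x)) (restrict_set R \<rho>)) \<le> card (restrict_set R \<rho>)"
    using assms(1) by (meson card_mono finite_subset mistakes_subset restrict_set_subset)
  ultimately show ?thesis
    by (cases "card (restrict_set R \<rho>) = 0") (auto simp: error_eq_card_mistakes r_def field_simps)
qed

lemma diff_div_le_ln_diff:
  fixes a b :: real
  assumes "0 < a" "0 < b"
  shows "(a - b) / a \<le> ln a - ln b"
proof -
  have "ln (b / a) \<le> b / a - 1"
    using assms by (intro ln_le_minus_one) simp
  moreover have "(a - b) / a = 1 - b / a"
    using assms by (simp add: field_simps)
  ultimately show ?thesis
    using assms by (simp add: ln_div)
qed

(* Bound on the mistakes on covered examples while r of the N examples are uncovered, when P
  makes at most E mistakes; below the threshold t examples are charged one by one. *)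
definition mistake_potential :: "real \<Rightarrow> real \<Rightarrow> real \<Rightarrow> real \<Rightarrow> real" where
  "mistake_potential E N t r =
     (if t \<le> r then 4 * E * ln (N / r) else 4 * E * ln (N / t) + (t - r))"

lemma mistake_potential_step:
  fixes E N t r m e :: real
  assumes "0 \<le> E" "4 * E \<le> t" "0 < t" "0 < N" "0 \<le> m" "e \<le> m"
    and e_le: "t \<le> r \<Longrightarrow> e \<le> 4 * E * m / r"
  shows "mistake_potential E N t r + e \<le> mistake_potential E N t (r - m)"
proof (cases "t \<le> r")
  case False
  then have "\<not> t \<le> r - m"
    using \<open>0 \<le> m\<close> by linarith
  with False \<open>e \<le> m\<close> show ?thesis
    by (simp add: mistake_potential_def)
next
  case t_le_r: True
  then have r_pos: "0 < r"
    using \<open>0 < t\<close> by linarith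
  have e_le': "e \<le> 4 * E * (m / r)"
    using e_le[OF t_le_r] by simp
  show ?thesis
  proof (cases "t \<le> r - m")
    case True
    have "4 * E * (m / r) \<le> 4 * E * (ln r - ln (r - m))"
      using diff_div_le_ln_diff[of r "r - m"] r_pos True \<open>0 < t\<close> \<open>0 \<le> E\<close>
      by (intro mult_left_mono) auto
    with e_le' True t_le_r r_pos \<open>0 < N\<close> \<open>0 < t\<close> show ?thesis
      by (simp add: mistake_potential_def ln_div algebra_simps)
  next
    case False
    have "4 * E * ((r - t) / r) \<le> 4 * E * (ln r - ln t)"
      using diff_div_le_ln_diff[of r t] r_pos \<open>0 < t\<close> \<open>0 \<le> E\<close> by (intro mult_left_mono) auto
    moreover have "4 * E / r * (t - (r - m)) \<le> t - (r - m)"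
      using False t_le_r r_pos \<open>4 * E \<le> t\<close> \<open>0 \<le> E\<close> by (intro mult_left_le_one_le) auto
    moreover have "4 * E * (m / r) = 4 * E * ((r - t) / r) + 4 * E / r * (t - (r - m))"
      using r_pos by (simp add: field_simps)
    ultimately have "e \<le> 4 * E * (ln r - ln t) + (t - (r - m))"
      using e_le' by linarith
    with False t_le_r r_pos \<open>0 < N\<close> \<open>0 < t\<close> show ?thesis
      by (simp add: mistake_potential_def ln_div algebra_simps)
  qed
qed

lemma card_mistakes_covered_snoc:
  assumes "finite S"
  shows "card (mistakes (subcube_list_hyp (L @ [\<rho>]) H) (S - uncovered (L @ [\<rho>]) S)) =
    card (mistakes (subcube_list_hyp L H) (S - uncovered L S)) +
    card (mistakes (\<lambda>x. Some (H \<rho> x)) (restrict_set (uncovered L S) \<rho>))"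
proof -
  define R where "R = uncovered L S"
  define R\<rho> where "R\<rho> = restrict_set R \<rho>"
  have "R \<subseteq> S" "R\<rho> \<subseteq> R"
    by (simp_all add: R_def uncovered_subset R\<rho>_def restrict_set_subset)
  have "mistakes (subcube_list_hyp (L @ [\<rho>]) H) (S - R) = mistakes (subcube_list_hyp L H) (S - R)"
    by (rule mistakes_cong) (auto simp: R_def uncovered_def subcube_list_hyp_append)
  moreover have "mistakes (subcube_list_hyp (L @ [\<rho>]) H) R\<rho> = mistakes (\<lambda>x. Some (H \<rho> x)) R\<rho>"
    by (rule mistakes_cong)
      (use \<open>R\<rho> \<subseteq> R\<close> in \<open>auto simp: R_def uncovered_def R\<rho>_def restrict_set_def subcube_list_hyp_append\<close>)
  moreover have "S - uncovered (L @ [\<rho>]) S = (S - R) \<union> R\<rho>"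
    using \<open>R \<subseteq> S\<close> \<open>R\<rho> \<subseteq> R\<close> by (auto simp: uncovered_snoc R_def R\<rho>_def)
  moreover have "mistakes (subcube_list_hyp L H) (S - R) \<inter> mistakes (\<lambda>x. Some (H \<rho> x)) R\<rho> = {}"
    using mistakes_subset \<open>R\<rho> \<subseteq> R\<close> by blast
  moreover have "finite (mistakes (subcube_list_hyp L H) (S - R))"
    using assms mistakes_subset by (metis finite_Diff finite_subset)
  moreover have "finite (mistakes (\<lambda>x. Some (H \<rho> x)) R\<rho>)"
    using assms \<open>R \<subseteq> S\<close> \<open>R\<rho> \<subseteq> R\<close> mistakes_subset by (metis finite_subset)
  ultimately show ?thesis
    by (simp add: mistakes_Un card_Un_disjoint R_def R\<rho>_def)
qed

lemma fsl_reach_uncovered: "fsl_reach n d S H ea s R L k \<Longrightarrow> R = uncovered L S"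
  by (induction rule: fsl_reach.induct) (simp_all add: uncovered_Nil uncovered_snoc)

lemma fsl_reach_card_le:
  assumes "fsl_reach n d S H ea s R L k" "finite S" "1 \<le> s"
  shows "real (card R) \<le> (1 - 1 / (2 * real s)) ^ k * card S"
  using assms(1)
proof induction
  case (step R L k \<rho>)
  have "finite R"
    using fsl_reach_uncovered[OF step.hyps(1)] uncovered_subset assms(2) by (metis finite_subset)
  have "card R / (2 * real s) \<le> card (restrict_set R \<rho>)"
  proof (cases "card R = 0")
    case False
    with step.hyps(3) show ?thesis
      by (simp add: candidates_def field_simps)
  qed simp
  moreover have "card (restrict_set R \<rho>) \<le> card R"
    using \<open>finite R\<close> restrict_set_subset by (rule card_mono)
  then have "card (R - restrict_set R \<rho>) = real (card R) - card (restrict_set R \<rho>)"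
    using card_Diff_subset[OF finite_subset[OF restrict_set_subset \<open>finite R\<close>] restrict_set_subset]
    by (simp add: of_nat_diff)
  ultimately have "card (R - restrict_set R \<rho>) \<le> (1 - 1 / (2 * real s)) * card R"
    by (simp add: algebra_simps)
  also have "\<dots> \<le> (1 - 1 / (2 * real s)) * ((1 - 1 / (2 * real s)) ^ k * card S)"
    using step.IH assms(3) by (intro mult_left_mono) auto
  finally show ?case
    by simp
qed simp

lemma one_minus_power_le_exp:
  fixes x :: real
  assumes "x \<le> 1"
  shows "(1 - x) ^ k \<le> exp (- (k * x))"
proof -
  have "(1 - x) ^ k \<le> exp (- x) ^ k"
    using assms exp_ge_add_one_self[of "- x"] by (intro power_mono) auto
  then show ?thesis
    by (simp add: exp_of_nat_mult[symmetric])
qed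

lemma fsl_reach_stop_card_le:
  fixes ea :: real
  assumes "fsl_reach n d S H ea s R L k" "\<not> loop_cond S ea s R k"
    and "finite S" "1 \<le> s" "0 < ea"
  shows "real (card R) \<le> ea * card S"
proof -
  have "card R \<le> card S"
    using fsl_reach_uncovered[OF assms(1)] uncovered_subset assms(3) by (metis card_mono)
  consider "real (card R) / real (card S) \<le> ea" | "iter_bound s ea \<le> k"
    using assms(2) by (auto simp: loop_cond_def)
  then show ?thesis
  proof cases
    case 1
    with \<open>card R \<le> card S\<close> show ?thesis
      by (cases "card S = 0") (auto simp: divide_le_eq)
  next
    case 2
    then have "ln (1 / ea) \<le> k * (1 / (2 * real s))"
      using assms(4) by (simp add: iter_bound_def field_simps)
    have "(1 - 1 / (2 * real s)) ^ k \<le> exp (- (k * (1 / (2 * real s))))"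
      using assms(4) by (intro one_minus_power_le_exp) simp
    also have "\<dots> \<le> exp (- ln (1 / ea))"
      using \<open>ln (1 / ea) \<le> _\<close> by simp
    also have "\<dots> = ea"
      using assms(5) by (simp add: ln_div)
    finally show ?thesis
      using fsl_reach_card_le[OF assms(1,3,4)] by (meson mult_right_mono of_nat_0_le_iff order_trans)
  qed
qed

lemma fsl_reach_card_mistakes_covered:
  fixes E t :: real
  assumes "fsl_reach n d S H ea s R L k" "finite S" "length P = s"
    and P: "\<forall>\<rho> \<in> set P. length \<rho> = n \<and> depth \<rho> \<le> d" and disj: "restrs_disjoint P"
    and mistakes_P: "card (mistakes (subcube_list_hyp P H) S) \<le> E"
    and "4 * E \<le> t" "0 < t" "t \<le> card S"
  shows "card (mistakes (subcube_list_hyp L H) (S - R)) \<le> mistake_potential E (card S) t (card R)"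
  using assms(1)
proof induction
  case init
  then show ?case
    using assms(8,9) by (simp add: mistake_potential_def mistakes_def)
next
  case (step R L k \<rho>)
  define R\<rho> where "R\<rho> = restrict_set R \<rho>"
  define e where "e = card (mistakes (\<lambda>x. Some (H \<rho> x)) R\<rho>)"
  have R: "R = uncovered L S"
    by (rule fsl_reach_uncovered[OF step.hyps(1)])
  have "R \<subseteq> S" "R\<rho> \<subseteq> R"
    by (simp_all add: R uncovered_subset R\<rho>_def restrict_set_subset)
  have "finite R"
    using \<open>R \<subseteq> S\<close> assms(2) by (rule finite_subset)
  have "0 \<le> E"
    using mistakes_P by (meson of_nat_0_le_iff order_trans)
  have "card R\<rho> \<le> card R"
    using \<open>finite R\<close> \<open>R\<rho> \<subseteq> R\<close> by (rule card_mono)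
  have "e \<le> card R\<rho>"
    unfolding e_def using \<open>finite R\<close> \<open>R\<rho> \<subseteq> R\<close> mistakes_subset by (metis card_mono finite_subset)
  have "e \<le> 4 * E * card R\<rho> / card R" if "t \<le> card R"
  proof -
    have "card (mistakes (subcube_list_hyp P H) R) \<le> card (mistakes (subcube_list_hyp P H) S)"
      using assms(2) \<open>R \<subseteq> S\<close> mistakes_subset by (meson card_mono finite_subset mistakes_mono)
    then show ?thesis
      using greedy_choice_mistakes_le[OF \<open>finite R\<close> _ P disj, of H E \<rho>] step.hyps(4) mistakes_P
        that \<open>0 < t\<close> \<open>4 * E \<le> t\<close> assms(3)
      by (force simp: e_def R\<rho>_def)
  qed
  then have "mistake_potential E (card S) t (card R) + e
      \<le> mistake_potential E (card S) t (real (card R) - card R\<rho>)"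
    using \<open>0 \<le> E\<close> assms(7,8,9) \<open>e \<le> card R\<rho>\<close> by (intro mistake_potential_step) auto
  moreover have "card (R - R\<rho>) = real (card R) - card R\<rho>"
    using card_Diff_subset[OF finite_subset[OF \<open>R\<rho> \<subseteq> R\<close> \<open>finite R\<close>] \<open>R\<rho> \<subseteq> R\<close>] \<open>card R\<rho> \<le> card R\<close>
    by (simp add: of_nat_diff)
  ultimately show ?case
    using step.IH card_mistakes_covered_snoc[OF assms(2), of L \<rho> H]
    by (simp add: R R\<rho>_def e_def uncovered_snoc)
qed

lemma card_mistakes_eq_covered_add_uncovered:
  assumes "finite S"
  shows "card (mistakes (subcube_list_hyp L H) S) =
    card (mistakes (subcube_list_hyp L H) (S - uncovered L S)) + card (uncovered L S)"
proof -
  have "mistakes (subcube_list_hyp L H) S =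
      mistakes (subcube_list_hyp L H) (S - uncovered L S) \<union> uncovered L S"
    using uncovered_subset_mistakes[of L S H] uncovered_subset[of L S] by (auto simp: mistakes_def)
  moreover have "finite (mistakes (subcube_list_hyp L H) (S - uncovered L S))" "finite (uncovered L S)"
    using assms uncovered_subset mistakes_subset by (metis finite_Diff finite_subset)+
  moreover have "mistakes (subcube_list_hyp L H) (S - uncovered L S) \<inter> uncovered L S = {}"
    using mistakes_subset by blast
  ultimately show ?thesis
    by (simp add: card_Un_disjoint)
qed

lemma find_subcube_list_card_mistakes_le:
  fixes ea E t :: real
  assumes "find_subcube_list n d S H ea s L" "finite S" "1 \<le> s" "0 < ea"
    and "length P = s" "\<forall>\<rho> \<in> set P. length \<rho> = n \<and> depth \<rho> \<le> d" "restrs_disjoint P"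
    and "card (mistakes (subcube_list_hyp P H) S) \<le> E"
    and "4 * E \<le> t" "ea * card S \<le> t" "0 < t" "t \<le> card S"
  shows "card (mistakes (subcube_list_hyp L H) S) \<le> 4 * E * ln (card S / t) + t"
proof -
  obtain R k where reach: "fsl_reach n d S H ea s R L k" and stop: "\<not> loop_cond S ea s R k"
    using assms(1) by (auto simp: find_subcube_list_def)
  have R: "R = uncovered L S"
    by (rule fsl_reach_uncovered[OF reach])
  have "card R \<le> t"
    using fsl_reach_stop_card_le[OF reach stop assms(2-4)] assms(10) by linarith
  have "card (mistakes (subcube_list_hyp L H) S) =
      card (mistakes (subcube_list_hyp L H) (S - R)) + card R"
    unfolding R by (rule card_mistakes_eq_covered_add_uncovered[OF assms(2)])
  also have "real \<dots> \<le> mistake_potential E (card S) t (card R) + card R"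
    using fsl_reach_card_mistakes_covered[OF reach assms(2,5-9,11,12)] by simp
  also have "\<dots> = 4 * E * ln (card S / t) + t"
    using \<open>card R \<le> t\<close> by (auto simp: mistake_potential_def)
  finally show ?thesis .
qed

lemma ln_bound_max_le:
  fixes E N ea :: real
  assumes "0 \<le> E" "0 < ea" "0 < N"
  shows "4 * E * ln (N / max (4 * E) (ea * N)) + max (4 * E) (ea * N)
    \<le> 4 * E * ln (1 / ea) + 4 * E + ea * N"
proof -
  have "0 < ea * N"
    using assms by simp
  then have "ln (N / max (4 * E) (ea * N)) \<le> ln (1 / ea)"
    using assms by (simp add: less_max_iff_disj field_simps)
  then have "4 * E * ln (N / max (4 * E) (ea * N)) \<le> 4 * E * ln (1 / ea)"
    using assms(1) by (intro mult_left_mono) auto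
  moreover have "max (4 * E) (ea * N) \<le> 4 * E + ea * N"
    using assms by simp
  ultimately show ?thesis
    by linarith
qed

theorem find_subcube_list_error_le:
  fixes ea \<epsilon> :: real
  assumes "find_subcube_list n d S H ea s L" "finite S" "1 \<le> s" "0 < ea" "ea \<le> 1"
    and "length P = s" "\<forall>\<rho> \<in> set P. length \<rho> = n \<and> depth \<rho> \<le> d" "restrs_disjoint P"
    and "error (subcube_list_hyp P H) S \<le> \<epsilon>"
  shows "error (subcube_list_hyp L H) S \<le> 4 * \<epsilon> * ln (1 / ea) + 4 * \<epsilon> + ea"
proof -
  have "0 \<le> \<epsilon>"
    using error_nonneg assms(9) by (rule order_trans)
  have "0 \<le> 4 * \<epsilon> * ln (1 / ea)"
    using \<open>0 \<le> \<epsilon>\<close> assms(4,5) by simp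
  consider "card S = 0" | "1 < 4 * \<epsilon>" | "0 < card S" "4 * \<epsilon> \<le> 1"
    by linarith
  then show ?thesis
  proof cases
    case 1
    with \<open>0 \<le> 4 * \<epsilon> * ln (1 / ea)\<close> \<open>0 \<le> \<epsilon>\<close> assms(4) show ?thesis
      by (simp add: error_def)
  next
    case 2
    with \<open>0 \<le> 4 * \<epsilon> * ln (1 / ea)\<close> error_le_1[OF assms(2), of "subcube_list_hyp L H"] assms(4)
    show ?thesis
      by linarith
  next
    case 3
    define N where "N = real (card S)"
    define t where "t = max (4 * (\<epsilon> * N)) (ea * N)"
    have "0 < N"
      using 3 by (simp add: N_def)
    have "card (mistakes (subcube_list_hyp P H) S) \<le> \<epsilon> * N"
      using assms(9) \<open>0 < N\<close> by (simp add: error_eq_card_mistakes N_def pos_divide_le_eq)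
    moreover have "0 < t" "t \<le> N"
      using \<open>0 < N\<close> 3 assms(4,5) by (simp_all add: t_def less_max_iff_disj mult_left_le_one_le)
    ultimately have "card (mistakes (subcube_list_hyp L H) S) \<le> 4 * (\<epsilon> * N) * ln (N / t) + t"
      unfolding N_def by (intro find_subcube_list_card_mistakes_le[OF assms(1-4,6-8)]) (simp_all add: t_def N_def)
    also have "\<dots> \<le> 4 * (\<epsilon> * N) * ln (1 / ea) + 4 * (\<epsilon> * N) + ea * N"
      unfolding t_def using \<open>0 \<le> \<epsilon>\<close> \<open>0 < N\<close> assms(4) by (intro ln_bound_max_le) auto
    finally show ?thesis
      using \<open>0 < N\<close> by (simp add: error_eq_card_mistakes N_def pos_divide_le_eq algebra_simps)
  qed
qed

lemma min_1_bound_le: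
  fixes ea \<epsilon> :: real
  assumes "0 < ea" "ea < 1" "0 \<le> \<epsilon>"
  shows "min 1 (4 * \<epsilon> * ln (1 / ea) + 4 * \<epsilon> + ea) \<le> 8 * (\<epsilon> * ln (1 / ea) + ea)"
proof (cases "1 / 8 \<le> ea")
  case True
  have "0 \<le> \<epsilon> * ln (1 / ea)"
    using assms by simp
  with True show ?thesis
    unfolding distrib_left by linarith
next
  case False
  have "exp 1 \<le> (8::real)"
    using exp_le by linarith
  also have "8 \<le> 1 / ea"
    using False assms(1) by (simp add: field_simps)
  finally have "1 \<le> ln (1 / ea)"
    using assms(1) by (simp add: ln_ge_iff)
  with assms(3) have "\<epsilon> \<le> \<epsilon> * ln (1 / ea)"
    by (simp add: mult_le_cancel_left1)
  with assms(1) show ?thesis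
    unfolding distrib_left by linarith
qed

theorem lemma7p5:
  "\<exists>C > 0. \<forall>(n::nat) (d::nat) (s::nat) (ea::real) (\<epsilon>::real)
      (S :: (point \<times> bool) set) (H :: restriction \<Rightarrow> hyp)
      (P :: restriction list) (L :: restriction list).
     finite S \<longrightarrow> (\<forall>(x, y) \<in> S. length x = n) \<longrightarrow>
     s \<ge> 1 \<longrightarrow> 0 < ea \<longrightarrow> ea < 1 \<longrightarrow>
     length P = s \<longrightarrow>
     (\<forall>\<rho> \<in> set P. length \<rho> = n \<and> depth \<rho> \<le> d) \<longrightarrow>
     (\<forall>i < s. \<forall>j < s. i \<noteq> j \<longrightarrow> restr_disjoint (P ! i) (P ! j)) \<longrightarrow>
     error (subcube_list_hyp P H) S \<le> \<epsilon> \<longrightarrow>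
     find_subcube_list n d S H ea s L \<longrightarrow>
     error (subcube_list_hyp L H) S \<le> C * (\<epsilon> * ln (1 / ea) + ea)"
proof (intro exI[of _ 8] conjI allI impI)
  fix n d s ea \<epsilon> S H P L
  assume "finite S" "\<forall>(x, y) \<in> S. length x = n" "1 \<le> s" "0 < ea" "ea < 1" "length P = s"
    and P: "\<forall>\<rho> \<in> set P. length \<rho> = n \<and> depth \<rho> \<le> d"
    and disj: "\<forall>i < s. \<forall>j < s. i \<noteq> j \<longrightarrow> restr_disjoint (P ! i) (P ! j)"
    and err_P: "error (subcube_list_hyp P H) S \<le> \<epsilon>"
    and fsl: "find_subcube_list n d S H ea s L"
  have "restrs_disjoint P"
    using disj \<open>length P = s\<close> by (simp add: restrs_disjoint_def)
  then have "error (subcube_list_hyp L H) S \<le> 4 * \<epsilon> * ln (1 / ea) + 4 * \<epsilon> + ea"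
    using find_subcube_list_error_le[OF fsl \<open>finite S\<close> \<open>1 \<le> s\<close> \<open>0 < ea\<close> _ \<open>length P = s\<close> P _ err_P]
      \<open>ea < 1\<close> by simp
  moreover have "error (subcube_list_hyp L H) S \<le> 1"
    using \<open>finite S\<close> by (rule error_le_1)
  moreover have "0 \<le> \<epsilon>"
    using error_nonneg err_P by (rule order_trans)
  ultimately show "error (subcube_list_hyp L H) S \<le> 8 * (\<epsilon> * ln (1 / ea) + ea)"
    using min_1_bound_le[OF \<open>0 < ea\<close> \<open>ea < 1\<close>] by (meson min.boundedI order_trans)
qed simp

end
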